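(* Let $\alpha=\exp\left(\frac{2\pi i}{5}\right)$, let $c,x\in\mathbb{C}$, let $a_1,\dots,a_p\in\mathbb{C}$ and $b_1,\dots,b_q\in\mathbb{C}\setminus\{0,-1,-2,\dots\}$, and suppose either $5p\le 5q+4$ (with $x$ arbitrary), or $p=q+1$ and $\left|\left(\frac{cx^2}{5^{1+q-p}}\right)^5\right|<1$. Then $$\sum_{k=0}^{4}{}_pF_q\left[\begin{array}{c}a_1,\dots,a_p;\\ b_1,\dots,b_q;\end{array}c(x\alpha^k)^2\right] =5\,{}_{5p}F_{5q+4}\left[\begin{array}{c}\Big\{\tfrac{a_j}{5},\tfrac{a_j+1}{5},\tfrac{a_j+2}{5},\tfrac{a_j+3}{5},\tfrac{a_j+4}{5}\Big\}_{j=1}^{p};\\ \tfrac15,\tfrac25,\tfrac35,\tfrac45,\Big\{\tfrac{b_j}{5},\tfrac{b_j+1}{5},\tfrac{b_j+2}{5},\tfrac{b_j+3}{5},\tfrac{b_j+4}{5}\Big\}_{j=1}^{q};\end{array}\left(\frac{cx^2}{5^{1+q-p}}\right)^5\right],$$ where the braces denote the lists of parameters obtained for $j=1,\dots,p$ (resp. $j=1,\dots,q$).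
   Context: The generalized hypergeometric function is ${}_pF_q\left[\begin{array}{c}\alpha_1,\dots,\alpha_p;\\\beta_1,\dots,\beta_q;\end{array}z\right]=\sum_{n=0}^{\infty}\frac{(\alpha_1)_n\cdots(\alpha_p)_n}{(\beta_1)_n\cdots(\beta_q)_n}\frac{z^n}{n!}$, with $(\lambda)_n=\lambda(\lambda+1)\cdots(\lambda+n-1)$, $(\lambda)_0=1$. Values of parameters and variables for which the expressions do not make sense are excluded. *)

theory Defs
  imports "HOL-Analysis.Analysis"
begin

definition hypergeomF :: "complex list \<Rightarrow> complex list \<Rightarrow> complex \<Rightarrow> complex" where
  "hypergeomF as bs z =
     (\<Sum>n. (\<Prod>a\<leftarrow>as. pochhammer a n) / (\<Prod>b\<leftarrow>bs. pochhammer b n) * z ^ n / fact n)"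

definition split5 :: "complex list \<Rightarrow> complex list" where
  "split5 as = concat (map (\<lambda>a. map (\<lambda>i. (a + of_nat i) / 5) [0..<5]) as)"

end

theory Submission
  imports Defs
begin

(* With z = c x^2 and omega = alpha^2 a primitive fifth root of unity, averaging the series
   over z omega^k (k < 5) keeps exactly the terms whose index is a multiple of 5. Gauss's
   multiplication formula (a)_(5m) = 5^(5m) prod_(i<5) ((a+i)/5)_m, applied to every parameter
   and to (5m)! = (1)_(5m), turns the term of index 5m into the m-th term of the
   5p F 5q+4 series at (z / 5^(1+q-p))^5. The pFq series converges on |u| = |z| by the ratio test. *)

lemma prod_list_map_mult: "(\<Prod>x\<leftarrow>xs. f x * g x) = (\<Prod>x\<leftarrow>xs. f x) * (\<Prod>x\<leftarrow>xs. (g x :: 'a::comm_monoid_mult))"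
  by (induction xs) (simp_all add: ac_simps)

lemma prod_list_map_divide_const: "(\<Prod>x\<leftarrow>xs. f x / d) = (\<Prod>x\<leftarrow>xs. f x) / (d :: 'a::field) ^ length xs"
  by (induction xs) simp_all

lemma tendsto_prod_list_map:
  fixes f :: "'a \<Rightarrow> 'b \<Rightarrow> 'c::{topological_semigroup_mult, monoid_mult}"
  assumes "\<And>x. x \<in> set xs \<Longrightarrow> (f x \<longlongrightarrow> l x) F"
  shows "((\<lambda>y. \<Prod>x\<leftarrow>xs. f x y) \<longlongrightarrow> (\<Prod>x\<leftarrow>xs. l x)) F"
  using assms by (induction xs) (simp_all add: tendsto_mult)

lemma summable_ratio_test_tendsto:
  fixes f :: "nat \<Rightarrow> 'a::banach"
  assumes ratio: "\<And>n. norm (f (Suc n)) \<le> r n * norm (f n)"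
    and "r \<longlonglongrightarrow> l" and "l < 1"
  shows "summable f"
proof -
  have "eventually (\<lambda>n. r n < (l + 1) / 2) sequentially"
    using \<open>r \<longlonglongrightarrow> l\<close> \<open>l < 1\<close> by (intro order_tendstoD(2)) auto
  then obtain N where N: "\<And>n. n \<ge> N \<Longrightarrow> r n < (l + 1) / 2"
    by (auto simp: eventually_sequentially)
  show ?thesis
  proof (rule summable_ratio_test)
    show "(l + 1) / 2 < 1" using \<open>l < 1\<close> by simp
    show "norm (f (Suc n)) \<le> (l + 1) / 2 * norm (f n)" if "n \<ge> N" for n
      using ratio[of n] mult_right_mono[OF less_imp_le[OF N[OF that]] norm_ge_zero[of "f n"]]
      by linarith
  qed
qed

lemma sum_root_of_unity_powers:
  fixes \<omega> :: "'a::field"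
  assumes root: "\<And>m. \<omega> ^ m = 1 \<longleftrightarrow> N dvd m"
  shows "(\<Sum>k<N. \<omega> ^ (k * n)) = (if N dvd n then of_nat N else 0)"
proof (cases "N dvd n")
  case True
  then have "\<omega> ^ (k * n) = 1" for k
    by (simp add: root)
  with True show ?thesis by simp
next
  case False
  then have "\<omega> ^ n \<noteq> 1" and "(\<omega> ^ n) ^ N = 1"
    by (simp_all add: root flip: power_mult)
  then have "(\<Sum>k<N. (\<omega> ^ n) ^ k) = 0"
    by (simp add: geometric_sum)
  moreover have "\<omega> ^ (k * n) = (\<omega> ^ n) ^ k" for k
    by (simp add: mult.commute flip: power_mult)
  ultimately show ?thesis
    using False by simp
qed

lemma exp_root_of_unity_power_eq_1_iff:
  assumes "N > 0"
  shows "exp (2 * of_real pi * \<i> * of_int j / of_nat N) ^ m = 1 \<longleftrightarrow> int N dvd j * int m"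
proof -
  have "exp (2 * of_real pi * \<i> * of_int j / of_nat N) ^ m
      = exp (\<i> * of_real (2 * pi * (of_int j * of_nat m / of_nat N)))"
    by (simp flip: exp_of_nat_mult) (simp add: field_simps)
  also have "\<dots> = 1 \<longleftrightarrow> (\<exists>k::int. of_int j * of_nat m / of_nat N = real_of_int k)"
  proof -
    have "2 * pi * r = of_int (2 * k) * pi \<longleftrightarrow> r = of_int k" for r :: real and k :: int
      by auto
    then show ?thesis
      by (simp only: exp_eq_1 Re_i_times Im_i_times Re_complex_of_real Im_complex_of_real) simp
  qed
  also have "\<dots> \<longleftrightarrow> int N dvd j * int m"
  proof
    assume "\<exists>k::int. of_int j * of_nat m / of_nat N = real_of_int k"
    then obtain k :: int where "real_of_int (j * int m) = real_of_int (int N * k)"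
      using assms by (auto simp: field_simps)
    then show "int N dvd j * int m" by (metis dvd_triv_left of_int_eq_iff)
  next
    assume "int N dvd j * int m"
    then obtain k where "j * int m = int N * k" ..
    then have "real_of_int (j * int m) = real_of_int (int N * k)" by (simp only:)
    with assms show "\<exists>k::int. of_int j * of_nat m / of_nat N = real_of_int k"
      by (auto simp: field_simps)
  qed
  finally show ?thesis .
qed

lemma exp_2pi_i_div_5_squared_power_eq_1_iff:
  "(exp (2 * of_real pi * \<i> / 5) ^ 2) ^ m = 1 \<longleftrightarrow> 5 dvd m"
proof -
  have "exp (2 * of_real pi * \<i> / 5) ^ 2 = exp (2 * of_real pi * \<i> * of_int 2 / of_nat 5)"
    by (simp add: field_simps flip: exp_of_nat_mult)
  then show ?thesis
    using exp_root_of_unity_power_eq_1_iff[of 5 2 m] by simp presburger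
qed

lemma sums_power_series_multisection:
  fixes f :: "nat \<Rightarrow> 'a::{real_normed_field, banach}" and \<omega> z :: 'a
  assumes root: "\<And>m. \<omega> ^ m = 1 \<longleftrightarrow> N dvd m" and "N > 0"
    and summable: "\<And>u. norm u = norm z \<Longrightarrow> summable (\<lambda>n. f n * u ^ n)"
  shows "(\<lambda>m. f (N * m) * z ^ (N * m)) sums ((\<Sum>k<N. \<Sum>n. f n * (z * \<omega> ^ k) ^ n) / of_nat N)"
proof -
  have "norm \<omega> = 1"
    using power_eq_1_iff[of \<omega> N] root[of N] \<open>N > 0\<close> by simp
  then have summable_k: "summable (\<lambda>n. f n * (z * \<omega> ^ k) ^ n)" for k
    by (intro summable) (simp add: norm_mult norm_power)
  define g where "g n = f n * z ^ n * (if N dvd n then of_nat N else 0)" for n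
  have g_eq: "(\<Sum>k<N. f n * (z * \<omega> ^ k) ^ n) = g n" for n
  proof -
    have "(\<Sum>k<N. f n * (z * \<omega> ^ k) ^ n) = f n * z ^ n * (\<Sum>k<N. \<omega> ^ (k * n))"
      by (simp add: sum_distrib_left power_mult_distrib mult_ac flip: power_mult)
    then show ?thesis
      by (simp add: g_def sum_root_of_unity_powers[OF root])
  qed
  have "g sums (\<Sum>k<N. \<Sum>n. f n * (z * \<omega> ^ k) ^ n)"
  proof -
    have "(\<lambda>n. \<Sum>k<N. f n * (z * \<omega> ^ k) ^ n) sums (\<Sum>k<N. \<Sum>n. f n * (z * \<omega> ^ k) ^ n)"
      by (intro sums_sum summable_sums summable_k)
    then show ?thesis by (simp add: g_eq)
  qed
  then have "(\<lambda>m. g (N * m)) sums (\<Sum>k<N. \<Sum>n. f n * (z * \<omega> ^ k) ^ n)"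
    by (subst sums_mono_reindex) (use \<open>N > 0\<close> in \<open>auto simp: strict_mono_def g_def\<close>)
  then have "(\<lambda>m. g (N * m) / of_nat N) sums ((\<Sum>k<N. \<Sum>n. f n * (z * \<omega> ^ k) ^ n) / of_nat N)"
    by (rule sums_divide)
  moreover have "g (N * m) / of_nat N = f (N * m) * z ^ (N * m)" for m
    using \<open>N > 0\<close> by (simp add: g_def)
  ultimately show ?thesis by simp
qed

lemma pochhammer_mult_eq_prod:
  fixes a :: "'a::field_char_0"
  assumes "N > 0"
  shows "pochhammer a (N * m) = of_nat N ^ (N * m) * (\<Prod>i<N. pochhammer ((a + of_nat i) / of_nat N) m)"
proof (induction m)
  case 0
  then show ?case by simp
next
  case (Suc m)
  have "pochhammer a (N * Suc m) = pochhammer a (N * m) * pochhammer (a + of_nat (N * m)) N"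
    using pochhammer_product'[of a "N * m" N] by (simp add: add.commute)
  also have "pochhammer (a + of_nat (N * m)) N = (\<Prod>i<N. a + of_nat i + of_nat N * of_nat m)"
    by (simp add: pochhammer_prod atLeast0LessThan algebra_simps)
  also have "\<dots> = of_nat N ^ N * (\<Prod>i<N. (a + of_nat i) / of_nat N + of_nat m)"
    using assms by (simp add: field_simps prod_dividef flip: prod.distrib)
  finally show ?case
    by (simp add: Suc.IH pochhammer_Suc prod.distrib power_add mult_ac)
qed

lemma prod_list_pochhammer_split5:
  "(\<Prod>a\<leftarrow>as. pochhammer a (5 * m)) = 5 ^ (5 * m * length as) * (\<Prod>a\<leftarrow>split5 as. pochhammer a m)"
proof (induction as)
  case Nil
  then show ?case by (simp add: split5_def)
next
  case (Cons a as)
  have "split5 (a # as) = map (\<lambda>i. (a + of_nat i) / 5) [0..<5] @ split5 as"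
    by (simp add: split5_def)
  then show ?case
    using pochhammer_mult_eq_prod[of 5 a m] Cons.IH
    by (simp add: numeral_eq_Suc lessThan_Suc upt_rec power_add mult_ac)
qed

lemma fact_5_mult:
  "(fact (5 * m) :: 'a::field_char_0) = 5 ^ (5 * m) * (\<Prod>b\<leftarrow>[1/5, 2/5, 3/5, 4/5]. pochhammer b m) * fact m"
  using pochhammer_mult_eq_prod[of 5 1 m]
  by (simp add: pochhammer_fact numeral_eq_Suc lessThan_Suc field_simps)

definition hypergeom_coeff :: "complex list \<Rightarrow> complex list \<Rightarrow> nat \<Rightarrow> complex" where
  "hypergeom_coeff as bs n = (\<Prod>a\<leftarrow>as. pochhammer a n) / (\<Prod>b\<leftarrow>bs. pochhammer b n) / fact n"

lemma hypergeomF_eq_suminf: "hypergeomF as bs z = (\<Sum>n. hypergeom_coeff as bs n * z ^ n)"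
  by (simp add: hypergeomF_def hypergeom_coeff_def)

lemma hypergeom_coeff_Suc:
  "hypergeom_coeff as bs (Suc n) =
     hypergeom_coeff as bs n * ((\<Prod>a\<leftarrow>as. a + of_nat n) / (\<Prod>b\<leftarrow>bs. b + of_nat n) / of_nat (Suc n))"
  by (simp add: hypergeom_coeff_def pochhammer_Suc prod_list_map_mult divide_inverse ac_simps)

lemma tendsto_add_of_nat_div_Suc: "(\<lambda>n. (c + of_nat n) / of_nat (Suc n)) \<longlonglongrightarrow> (1 :: 'a::real_normed_field)"
proof -
  have "(\<lambda>n. 1 + (c - 1) * inverse (of_nat (Suc n))) \<longlonglongrightarrow> 1 + (c - 1) * (0 :: 'a)"
    by (intro tendsto_intros LIMSEQ_Suc[OF lim_inverse_n])
  moreover have "1 + (c - 1) * inverse (of_nat (Suc n)) = (c + of_nat n) / of_nat (Suc n)" for n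
    using of_nat_neq_0[of n, where 'a='a] by (simp add: field_simps del: of_nat_Suc) simp
  ultimately show ?thesis by simp
qed

(* The limit 0 ^ k is 1 if p = q + 1 and 0 if p <= q. *)
lemma hypergeom_ratio_tendsto:
  fixes as bs :: "complex list"
  assumes "length as \<le> length bs + 1"
  shows "(\<lambda>n. (\<Prod>a\<leftarrow>as. a + of_nat n) / (\<Prod>b\<leftarrow>bs. b + of_nat n) / of_nat (Suc n))
           \<longlonglongrightarrow> 0 ^ (length bs + 1 - length as)"
proof -
  have inverse_Suc: "(\<lambda>n. inverse (of_nat (Suc n)) :: complex) \<longlonglongrightarrow> 0"
    by (rule LIMSEQ_Suc[OF lim_inverse_n])
  have prod_one: "(\<lambda>n. \<Prod>c\<leftarrow>cs. (c + of_nat n) / of_nat (Suc n)) \<longlonglongrightarrow> 1" for cs :: "complex list"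
    using tendsto_prod_list_map[of cs "\<lambda>c n. (c + of_nat n) / of_nat (Suc n)" "\<lambda>_. 1", OF tendsto_add_of_nat_div_Suc]
    by (simp add: map_replicate_const)
  have "(\<lambda>n. (\<Prod>a\<leftarrow>as. (a + of_nat n) / of_nat (Suc n)) / (\<Prod>b\<leftarrow>bs. (b + of_nat n) / of_nat (Suc n))
      * inverse (of_nat (Suc n)) ^ (length bs + 1 - length as)) \<longlonglongrightarrow> 1 / 1 * 0 ^ (length bs + 1 - length as)"
    by (intro tendsto_mult[OF tendsto_divide[OF prod_one prod_one] tendsto_power[OF inverse_Suc]]) simp
  moreover have "(\<Prod>a\<leftarrow>as. (a + of_nat n) / of_nat (Suc n)) / (\<Prod>b\<leftarrow>bs. (b + of_nat n) / of_nat (Suc n))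
      * inverse (of_nat (Suc n)) ^ (length bs + 1 - length as)
      = (\<Prod>a\<leftarrow>as. a + of_nat n) / (\<Prod>b\<leftarrow>bs. b + of_nat n) / of_nat (Suc n)" for n
  proof -
    define d :: complex where "d = of_nat (Suc n)"
    define A where "A = (\<Prod>a\<leftarrow>as. a + of_nat n)"
    define B where "B = (\<Prod>b\<leftarrow>bs. b + of_nat n)"
    have "A / d ^ length as / (B / d ^ length bs) * inverse d ^ (length bs + 1 - length as)
        = A * d ^ length bs / (B * (d ^ length as * d ^ (length bs + 1 - length as)))"
      by (simp add: divide_inverse power_inverse ac_simps)
    also have "d ^ length as * d ^ (length bs + 1 - length as) = d * d ^ length bs"
      using assms by (simp flip: power_add)
    also have "A * d ^ length bs / (B * (d * d ^ length bs)) = A / B / d * (d ^ length bs / d ^ length bs)"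
      by (simp add: ac_simps)
    also have "\<dots> = A / B / d"
      by (simp add: d_def del: of_nat_Suc)
    finally show ?thesis
      by (simp add: A_def B_def d_def prod_list_map_divide_const del: of_nat_Suc)
  qed
  ultimately show ?thesis by simp
qed

lemma summable_hypergeom_series:
  fixes as bs :: "complex list" and z :: complex
  assumes "length as \<le> length bs \<or> length as = length bs + 1 \<and> norm z < 1"
  shows "summable (\<lambda>n. hypergeom_coeff as bs n * z ^ n)"
proof -
  define \<rho> where "\<rho> n = (\<Prod>a\<leftarrow>as. a + of_nat n) / (\<Prod>b\<leftarrow>bs. b + of_nat n) / of_nat (Suc n)" for n
  define l where "l = norm z * norm ((0::complex) ^ (length bs + 1 - length as))"
  show ?thesis
  proof (rule summable_ratio_test_tendsto)
    show "norm (hypergeom_coeff as bs (Suc n) * z ^ Suc n) \<le> norm z * norm (\<rho> n) * norm (hypergeom_coeff as bs n * z ^ n)" for n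
    proof -
      have "hypergeom_coeff as bs (Suc n) * z ^ Suc n = z * \<rho> n * (hypergeom_coeff as bs n * z ^ n)"
        by (simp only: hypergeom_coeff_Suc \<rho>_def power_Suc mult_ac)
      then show ?thesis by (simp only: norm_mult order_refl)
    qed
    have "\<rho> \<longlonglongrightarrow> 0 ^ (length bs + 1 - length as)"
      unfolding \<rho>_def using assms by (intro hypergeom_ratio_tendsto) auto
    then show "(\<lambda>n. norm z * norm (\<rho> n)) \<longlonglongrightarrow> l"
      unfolding l_def by (intro tendsto_intros)
    show "l < 1"
      using assms by (auto simp: l_def power_0_left)
  qed
qed

lemma hypergeom_coeff_split5:
  "hypergeom_coeff as bs (5 * m) =
     hypergeom_coeff (split5 as) ([1/5, 2/5, 3/5, 4/5] @ split5 bs) m /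
     (5 powi (1 + int (length bs) - int (length as))) ^ (5 * m)"
proof -
  have powi_eq: "(5::complex) powi (1 + int (length bs) - int (length as)) = 5 ^ (length bs + 1) / 5 ^ length as"
    by (simp add: power_int_diff flip: of_nat_Suc)
  have "(5 powi (1 + int (length bs) - int (length as))) ^ (5 * m) =
      (5::complex) ^ (5 * m * length bs) * 5 ^ (5 * m) / 5 ^ (5 * m * length as)"
    unfolding powi_eq power_divide power_add power_one_right power_mult_distrib
    by (simp only: mult.commute[of "5 * m"] power_mult)
  moreover have "x * A / (y * B) / (z * C * F) = A / (C * B) / F / (y * z / x)"
    for x y z A B C F :: complex
    by (simp add: divide_inverse ac_simps)
  ultimately show ?thesis
    unfolding hypergeom_coeff_def prod_list_pochhammer_split5 fact_5_mult map_append prod_list.append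
    by simp
qed

theorem theorem7:
  fixes c x :: complex and as bs :: "complex list"
  defines "\<alpha> \<equiv> exp (2 * of_real pi * \<i> / 5)"
  defines "p \<equiv> length as" and "q \<equiv> length bs"
  assumes hb: "\<forall>b\<in>set bs. b \<notin> \<int>\<^sub>\<le>\<^sub>0"
  assumes hpq: "5 * p \<le> 5 * q + 4 \<or>
      (p = q + 1 \<and> norm ((c * x^2 / 5 powi (1 + int q - int p)) ^ 5) < 1)"
  shows "(\<Sum>k=0..4. hypergeomF as bs (c * (x * \<alpha> ^ k)^2)) =
     5 * hypergeomF (split5 as) ([1/5, 2/5, 3/5, 4/5] @ split5 bs)
           ((c * x^2 / 5 powi (1 + int q - int p)) ^ 5)"
proof -
  define z where "z = c * x^2"
  have convergent: "summable (\<lambda>n. hypergeom_coeff as bs n * u ^ n)" if "norm u = norm z" for u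
    using hpq that
    by (intro summable_hypergeom_series) (auto simp: p_def q_def z_def norm_power power_less_one_iff)
  have "(\<lambda>m. hypergeom_coeff as bs (5 * m) * z ^ (5 * m)) sums
      ((\<Sum>k<5. \<Sum>n. hypergeom_coeff as bs n * (z * (\<alpha> ^ 2) ^ k) ^ n) / of_nat 5)"
    by (rule sums_power_series_multisection[OF exp_2pi_i_div_5_squared_power_eq_1_iff[folded \<alpha>_def]
          _ convergent]) simp_all
  moreover have "hypergeom_coeff as bs (5 * m) * z ^ (5 * m) =
      hypergeom_coeff (split5 as) ([1/5, 2/5, 3/5, 4/5] @ split5 bs) m *
      ((z / 5 powi (1 + int q - int p)) ^ 5) ^ m" for m
    by (simp add: hypergeom_coeff_split5 p_def q_def power_divide flip: power_mult)
  moreover have "(\<Sum>k=0..4. hypergeomF as bs (c * (x * \<alpha> ^ k)^2)) =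
      (\<Sum>k<5. \<Sum>n. hypergeom_coeff as bs n * (z * (\<alpha> ^ 2) ^ k) ^ n)"
  proof -
    have "c * (x * \<alpha> ^ k)^2 = z * (\<alpha> ^ 2) ^ k" for k
      by (simp add: z_def power_mult_distrib mult_ac flip: power_mult)
    moreover have "{0..4::nat} = {..<5}" by auto
    ultimately show ?thesis by (simp add: hypergeomF_eq_suminf)
  qed
  ultimately have "(\<lambda>m. hypergeom_coeff (split5 as) ([1/5, 2/5, 3/5, 4/5] @ split5 bs) m *
      ((z / 5 powi (1 + int q - int p)) ^ 5) ^ m) sums ((\<Sum>k=0..4. hypergeomF as bs (c * (x * \<alpha> ^ k)^2)) / 5)"
    by simp
  then show ?thesis
    by (simp add: hypergeomF_eq_suminf z_def sums_iff mult.commute)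
qed

end
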